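(* Let $\mathbf C$ be the middle-third Cantor set, $s=\log_32$, $\mathcal R=\bigcup\{\mathbf C+k/3^n:k,n\in\mathbb Z\}$, $\mathfrak H^s$ the $s$-dimensional Hausdorff measure restricted to $\mathcal R$, and $\mathcal H=L^2(\mathcal R,\mathfrak H^s)$. Let $M$ be the cascade operator $M=U^{-1}\pi(m_0)$ on $\mathcal H$, i.e. $M\xi(x)=\xi(3x)+\xi(3x-2)$. Let $\xi\in\mathcal H$ have bounded support and suppose $\xi$ is not a constant multiple of $\chi_{\mathbf C}$. Then there is a constant $c_\xi>0$ such that $\lim_{n\to\infty}\|M^{n+1}\xi-M^n\xi\|^2=c_\xi$. In particular, $(M^n\xi)_{n\in\mathbb N}$ does not converge in $\mathcal H$.
   Context: Here $Uf(x)=\frac1{\sqrt2}f(x/3)$ and $Tf(x)=f(x-1)$ are unitary operators on $\mathcal H$, $\pi(f)=f(T)$ for $f\in L^\infty(\mathbb T)$ (so $\pi(z^n)=T^n$), and $m_0(z)=\frac1{\sqrt2}(1+z^2)$, so $\pi(m_0)=\frac1{\sqrt2}(I+T^2)$. *)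

theory Defs
  imports "HOL-Analysis.Analysis"
begin

definition cantor_set :: "real set" where
  "cantor_set = {x. \<exists>d::nat \<Rightarrow> nat. (\<forall>k. d k \<in> {0, 2}) \<and>
                     x = (\<Sum>k. real (d k) / 3 ^ Suc k)}"

definition cantor_R :: "real set" where
  "cantor_R = \<Union> {(\<lambda>x. x + real_of_int k / 3 powi n) ` cantor_set | k n :: int. True}"

text \<open>s-dimensional Hausdorff outer measure on the real line (countable covers by
  bounded sets of diameter at most delta, no normalising constant).\<close>
definition hausdorff_delta :: "real \<Rightarrow> real \<Rightarrow> real set \<Rightarrow> ennreal" where
  "hausdorff_delta s \<delta> A =
     (INF U \<in> {U :: nat \<Rightarrow> real set. A \<subseteq> (\<Union>i. U i) \<and>
                 (\<forall>i. bounded (U i) \<and> diameter (U i) \<le> \<delta>)}.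
        (\<Sum>i. ennreal (diameter (U i) powr s)))"

definition hausdorff_outer :: "real \<Rightarrow> real set \<Rightarrow> ennreal" where
  "hausdorff_outer s A = (SUP \<delta> \<in> {0<..}. hausdorff_delta s \<delta> A)"

definition cantor_measure :: "real measure" where
  "cantor_measure = measure_of UNIV (sets borel)
      (\<lambda>A. hausdorff_outer (log 3 2) (A \<inter> cantor_R))"

definition in_L2 :: "(real \<Rightarrow> complex) \<Rightarrow> bool" where
  "in_L2 f \<longleftrightarrow> f \<in> borel_measurable cantor_measure \<and>
                integrable cantor_measure (\<lambda>x. (cmod (f x))\<^sup>2)"

definition L2_norm_sq :: "(real \<Rightarrow> complex) \<Rightarrow> real" where
  "L2_norm_sq f = integral\<^sup>L cantor_measure (\<lambda>x. (cmod (f x))\<^sup>2)"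

definition cascade :: "(real \<Rightarrow> complex) \<Rightarrow> (real \<Rightarrow> complex)" where
  "cascade \<xi> = (\<lambda>x. \<xi> (3 * x) + \<xi> (3 * x - 2))"

end

theory Submission
  imports Defs
begin

(* The maps x \<mapsto> 3x and x \<mapsto> 3x - 2 preserve R and scale H^s|R by 1/2, so the cascade
   operator M is an isometry on functions supported in J = [-1/4, 5/4], where the two terms
   of M f have disjoint supports. M also contracts supports towards [0, 1], so for large N
   the function \<eta> = M^N \<xi> is supported in J and |M^(n+1) \<xi> - M^n \<xi>|^2 = |M \<eta> - \<eta>|^2 for
   all n \<ge> N. This constant is positive: otherwise \<eta> is a fixed point of M, hence vanishes off
   the Cantor set C (the intersection of the iterated preimages of J), and the distribution
   function F of \<eta> - a \<chi>_C, with a chosen to make its mean zero, satisfies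
   F t = (F (3t) + F (3t - 2)) / 2 and vanishes outside [0, 1), which forces F = 0, so
   \<eta> = a \<chi>_C. As M is injective on functions whose support is bounded below and fixes \<chi>_C,
   \<xi> = a \<chi>_C almost everywhere, a contradiction. Consecutive squared distances tending to a
   positive constant rule out convergence. *)

section \<open>Hausdorff outer measure under similarities\<close>

lemma ennreal_mult_INF:
  fixes c :: ennreal
  assumes "0 < c" "c < top"
  shows "c * (INF i\<in>I. f i) = (INF i\<in>I. c * f i)"
proof (rule antisym)
  show "c * (INF i\<in>I. f i) \<le> (INF i\<in>I. c * f i)"
    by (rule INF_greatest) (simp add: INF_lower mult_left_mono)
  have inv: "inverse c * c = 1"
    using ennreal_divide_self[of c] assms by (simp add: divide_ennreal_def mult.commute)
  have "inverse c * (INF i\<in>I. c * f i) \<le> (INF i\<in>I. f i)"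
  proof (rule INF_greatest)
    fix i assume "i \<in> I"
    then have "inverse c * (INF i\<in>I. c * f i) \<le> inverse c * (c * f i)"
      by (intro mult_left_mono INF_lower) auto
    also have "\<dots> = f i" using inv by (simp add: mult.assoc[symmetric])
    finally show "inverse c * (INF i\<in>I. c * f i) \<le> f i" .
  qed
  then have "c * (inverse c * (INF i\<in>I. c * f i)) \<le> c * (INF i\<in>I. f i)"
    by (rule mult_left_mono) simp
  then show "(INF i\<in>I. c * f i) \<le> c * (INF i\<in>I. f i)"
    using inv by (simp add: mult.assoc[symmetric] mult.commute)
qed

lemma bounded_affine_image:
  fixes c t :: real
  shows "bounded U \<Longrightarrow> bounded ((\<lambda>x. c*x + t) ` U)"
  using bounded_translation[OF bounded_scaling[of U c], of t] by (simp add: image_image add.commute)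

lemma diameter_affine_image_le:
  fixes c t :: real
  assumes "c > 0" "bounded U"
  shows "diameter ((\<lambda>x. c*x + t) ` U) \<le> c * diameter U"
proof (rule diameter_le)
  show "(\<lambda>x. c*x + t) ` U \<noteq> {} \<or> 0 \<le> c * diameter U"
    using assms by (auto simp: diameter_ge_0)
  fix x y assume "x \<in> (\<lambda>x. c*x + t) ` U" "y \<in> (\<lambda>x. c*x + t) ` U"
  then obtain a b where "a \<in> U" "b \<in> U" "x = c*a + t" "y = c*b + t" by auto
  moreover have "dist a b \<le> diameter U" if "a \<in> U" "b \<in> U" for a b
    using diameter_bounded_bound[OF assms(2) that] .
  ultimately show "norm (x - y) \<le> c * diameter U"
    using assms(1) by (simp add: dist_real_def abs_mult right_diff_distrib[symmetric])
qed

lemma affine_image_inverse: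
  fixes c t :: real
  assumes "c > 0"
  shows "(\<lambda>x. (1/c)*x + (-t/c)) ` (\<lambda>x. c*x + t) ` A = A"
  using assms by (force simp: image_iff field_simps)

lemma diameter_affine_image:
  fixes c t :: real
  assumes "c > 0" "bounded U"
  shows "diameter ((\<lambda>x. c*x + t) ` U) = c * diameter U"
proof (rule antisym)
  show "diameter ((\<lambda>x. c*x + t) ` U) \<le> c * diameter U"
    using diameter_affine_image_le[OF assms] .
  have "diameter ((\<lambda>x. (1/c)*x + (-t/c)) ` (\<lambda>x. c*x + t) ` U)
      \<le> (1/c) * diameter ((\<lambda>x. c*x + t) ` U)"
    using assms by (intro diameter_affine_image_le bounded_affine_image) auto
  then show "c * diameter U \<le> diameter ((\<lambda>x. c*x + t) ` U)"
    using assms(1) unfolding affine_image_inverse[OF assms(1)] by (simp add: field_simps)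
qed

lemma hausdorff_delta_affine_image_le:
  fixes c t :: real
  assumes "c > 0"
  shows "hausdorff_delta s (c*\<delta>) ((\<lambda>x. c*x + t) ` A) \<le> ennreal (c powr s) * hausdorff_delta s \<delta> A"
proof -
  let ?\<phi> = "\<lambda>x. c*x + t"
  let ?covers = "\<lambda>\<delta> A. {U :: nat \<Rightarrow> real set. A \<subseteq> (\<Union>i. U i) \<and> (\<forall>i. bounded (U i) \<and> diameter (U i) \<le> \<delta>)}"
  have "hausdorff_delta s (c*\<delta>) (?\<phi> ` A) \<le> ennreal (c powr s) * (\<Sum>i. ennreal (diameter (U i) powr s))"
    if U: "U \<in> ?covers \<delta> A" for U
  proof -
    have "(\<lambda>i. ?\<phi> ` U i) \<in> ?covers (c*\<delta>) (?\<phi> ` A)"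
      using U assms by (fastforce simp: diameter_affine_image bounded_affine_image)
    then have "hausdorff_delta s (c*\<delta>) (?\<phi> ` A) \<le> (\<Sum>i. ennreal (diameter (?\<phi> ` U i) powr s))"
      unfolding hausdorff_delta_def by (rule INF_lower)
    also have "\<dots> = (\<Sum>i. ennreal (c powr s) * ennreal (diameter (U i) powr s))"
      using U assms by (simp add: diameter_affine_image powr_mult diameter_ge_0 ennreal_mult)
    finally show ?thesis by simp
  qed
  then have "hausdorff_delta s (c*\<delta>) (?\<phi> ` A)
      \<le> (INF U\<in>?covers \<delta> A. ennreal (c powr s) * (\<Sum>i. ennreal (diameter (U i) powr s)))"
    by (intro INF_greatest)
  also have "\<dots> = ennreal (c powr s) * hausdorff_delta s \<delta> A"
    unfolding hausdorff_delta_def using assms by (subst ennreal_mult_INF) auto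
  finally show ?thesis .
qed

lemma hausdorff_outer_affine_image_le:
  fixes c t :: real
  assumes "c > 0"
  shows "hausdorff_outer s ((\<lambda>x. c*x + t) ` A) \<le> ennreal (c powr s) * hausdorff_outer s A"
  unfolding hausdorff_outer_def
proof (rule SUP_least)
  fix \<delta> :: real assume "\<delta> \<in> {0<..}"
  then have "\<delta>/c \<in> {0<..}" using assms by simp
  have "hausdorff_delta s \<delta> ((\<lambda>x. c*x + t) ` A) = hausdorff_delta s (c*(\<delta>/c)) ((\<lambda>x. c*x + t) ` A)"
    using assms by simp
  also have "\<dots> \<le> ennreal (c powr s) * hausdorff_delta s (\<delta>/c) A"
    by (rule hausdorff_delta_affine_image_le[OF assms])
  also have "\<dots> \<le> ennreal (c powr s) * (SUP \<delta>\<in>{0<..}. hausdorff_delta s \<delta> A)"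
    using \<open>\<delta>/c \<in> {0<..}\<close> by (intro mult_left_mono SUP_upper) auto
  finally show "hausdorff_delta s \<delta> ((\<lambda>x. c*x + t) ` A) \<le> ennreal (c powr s) * (SUP \<delta>\<in>{0<..}. hausdorff_delta s \<delta> A)" .
qed

lemma hausdorff_outer_affine_image:
  fixes c t :: real
  assumes "c > 0"
  shows "hausdorff_outer s ((\<lambda>x. c*x + t) ` A) = ennreal (c powr s) * hausdorff_outer s A"
proof (rule antisym)
  show "hausdorff_outer s ((\<lambda>x. c*x + t) ` A) \<le> ennreal (c powr s) * hausdorff_outer s A"
    by (rule hausdorff_outer_affine_image_le[OF assms])
  have "hausdorff_outer s A \<le> ennreal ((1/c) powr s) * hausdorff_outer s ((\<lambda>x. c*x + t) ` A)"
    using hausdorff_outer_affine_image_le[of "1/c" s "-t/c" "(\<lambda>x. c*x + t) ` A"] assms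
    unfolding affine_image_inverse[OF assms] by simp
  then have "ennreal (c powr s) * hausdorff_outer s A
      \<le> ennreal (c powr s * (1/c) powr s) * hausdorff_outer s ((\<lambda>x. c*x + t) ` A)"
    by (simp add: ennreal_mult mult.assoc mult_left_mono)
  also have "c powr s * (1/c) powr s = 1" using assms by (simp add: powr_mult[symmetric])
  finally show "ennreal (c powr s) * hausdorff_outer s A \<le> hausdorff_outer s ((\<lambda>x. c*x + t) ` A)"
    by simp
qed

section \<open>The Cantor set\<close>

definition ternary_value :: "(nat \<Rightarrow> nat) \<Rightarrow> real" where
  "ternary_value d = (\<Sum>k. real (d k) / 3 ^ Suc k)"

definition cantor_digits :: "(nat \<Rightarrow> nat) \<Rightarrow> bool" where
  "cantor_digits d \<longleftrightarrow> (\<forall>k. d k \<in> {0, 2})"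

lemma cantor_set_iff: "x \<in> cantor_set \<longleftrightarrow> (\<exists>d. cantor_digits d \<and> x = ternary_value d)"
  unfolding cantor_set_def ternary_value_def cantor_digits_def by auto

lemma ternary_term_le:
  assumes "cantor_digits d"
  shows "real (d k) / 3 ^ Suc k \<le> (2/3) * (1/3::real)^k"
proof -
  have "real (d k) \<le> 2" using assms[unfolded cantor_digits_def, rule_format, of k] by auto
  then have "real (d k) / 3 ^ Suc k \<le> 2 / 3 ^ Suc k" by (simp add: divide_right_mono)
  then show ?thesis by (simp add: power_one_over)
qed

lemma sums_two_thirds_geometric: "(\<lambda>k. (2/3) * (1/3::real)^k) sums 1"
  using sums_mult[OF geometric_sums[of "1/3::real"], of "2/3"] by simp

lemma summable_ternary: "cantor_digits d \<Longrightarrow> summable (\<lambda>k. real (d k) / 3 ^ Suc k)"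
  by (rule summable_comparison_test[of _ "\<lambda>k. (2/3) * (1/3::real)^k"])
     (use ternary_term_le sums_two_thirds_geometric sums_summable in auto)

lemma ternary_value_bounds:
  assumes "cantor_digits d"
  shows "0 \<le> ternary_value d" "ternary_value d \<le> 1"
proof -
  show "0 \<le> ternary_value d"
    unfolding ternary_value_def by (rule suminf_nonneg) (use summable_ternary[OF assms] in auto)
  have "ternary_value d \<le> (\<Sum>k. (2/3) * (1/3::real)^k)"
    unfolding ternary_value_def
    by (rule suminf_le) (use ternary_term_le[OF assms] summable_ternary[OF assms]
                             sums_two_thirds_geometric sums_summable in auto)
  then show "ternary_value d \<le> 1" using sums_unique[OF sums_two_thirds_geometric] by simp
qed

lemma ternary_value_Cons:
  assumes "a \<in> {0,2}" "cantor_digits d"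
  shows "cantor_digits (case_nat a d)" "ternary_value (case_nat a d) = (real a + ternary_value d) / 3"
proof -
  show digits: "cantor_digits (case_nat a d)"
    using assms unfolding cantor_digits_def by (auto split: nat.split)
  have "(\<lambda>k. real (d k) / 3 ^ Suc (Suc k)) sums (ternary_value d / 3)"
    using sums_divide[OF summable_sums[OF summable_ternary[OF assms(2)]], of 3]
    by (simp add: ternary_value_def mult.commute)
  then have "(\<lambda>k. real (case_nat a d k) / 3 ^ Suc k) sums (ternary_value d / 3 + real a / 3)"
    using sums_Suc[of "\<lambda>k. real (case_nat a d k) / 3 ^ Suc k"] by simp
  then show "ternary_value (case_nat a d) = (real a + ternary_value d) / 3"
    unfolding ternary_value_def by (simp add: sums_iff add_divide_distrib)
qed

lemma cantor_set_bounds: "x \<in> cantor_set \<Longrightarrow> 0 \<le> x \<and> x \<le> 1"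
  unfolding cantor_set_iff using ternary_value_bounds by blast

lemma cantor_set_self_similar: "x \<in> cantor_set \<longleftrightarrow> 3*x \<in> cantor_set \<or> 3*x - 2 \<in> cantor_set"
proof
  assume "x \<in> cantor_set"
  then obtain d where d: "cantor_digits d" "x = ternary_value d"
    unfolding cantor_set_iff by blast
  have "case_nat (d 0) (\<lambda>k. d (Suc k)) = d" by (rule ext) (simp split: nat.split)
  moreover have "d 0 \<in> {0,2}" "cantor_digits (\<lambda>k. d (Suc k))"
    using d(1) unfolding cantor_digits_def by auto
  ultimately have "3*x - real (d 0) \<in> cantor_set" "d 0 \<in> {0,2}"
    using ternary_value_Cons[of "d 0" "\<lambda>k. d (Suc k)"] d(2) unfolding cantor_set_iff by auto
  then show "3*x \<in> cantor_set \<or> 3*x - 2 \<in> cantor_set" by auto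
next
  have "(real a + y) / 3 \<in> cantor_set" if "a \<in> {0,2}" "y \<in> cantor_set" for a y
    using that ternary_value_Cons[OF that(1)] unfolding cantor_set_iff by metis
  from this[of 0 "3*x"] this[of 2 "3*x - 2"]
  show "3*x \<in> cantor_set \<or> 3*x - 2 \<in> cantor_set \<Longrightarrow> x \<in> cantor_set" by auto
qed

lemma indicator_cantor_set_self_similar:
  "indicator cantor_set (3*x) + indicator cantor_set (3*x - 2) = (indicator cantor_set x :: 'a::ring_1)"
proof -
  have "\<not> (3*x \<in> cantor_set \<and> 3*x - 2 \<in> cantor_set)"
    using cantor_set_bounds[of "3*x"] cantor_set_bounds[of "3*x - 2"] by auto
  then show ?thesis using cantor_set_self_similar[of x] by (auto simp: indicator_def)
qed

primrec cantor_approx :: "nat \<Rightarrow> real set" where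
  "cantor_approx 0 = {-1/4..5/4}"
| "cantor_approx (Suc n) = {x. 3*x \<in> cantor_approx n \<or> 3*x - 2 \<in> cantor_approx n}"

lemma cantor_approx_subset: "cantor_approx n \<subseteq> {-1/4..5/4}"
  by (induction n) auto

lemma cantor_set_subset_cantor_approx: "cantor_set \<subseteq> cantor_approx n"
proof (induction n)
  case 0 then show ?case using cantor_set_bounds by fastforce
next
  case (Suc n) then show ?case using cantor_set_self_similar by auto
qed

text \<open>The two branches of \<open>cantor_approx (Suc n)\<close> lie on either side of \<open>1/2\<close>,
  so the branch, i.e.\ the next ternary digit, can be read off from \<open>x\<close>.\<close>
lemma cantor_approx_Suc_branch:
  assumes "x \<in> cantor_approx (Suc n)"
  shows "3*x - (if x < 1/2 then 0 else 2) \<in> cantor_approx n"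
  using assms cantor_approx_subset[of n] by (auto split: if_split_asm)

lemma INT_cantor_approx_subset: "(\<Inter>n. cantor_approx n) \<subseteq> cantor_set"
proof
  fix x assume x: "x \<in> (\<Inter>n. cantor_approx n)"
  define digit :: "real \<Rightarrow> nat" where "digit y = (if y < 1/2 then 0 else 2)" for y
  define y where "y k = ((\<lambda>y. 3*y - real (digit y)) ^^ k) x" for k
  have y_approx: "y k \<in> cantor_approx n" for k n
  proof (induction k arbitrary: n)
    case 0 then show ?case using x by (simp add: y_def)
  next
    case (Suc k)
    have "y (Suc k) = 3 * y k - (if y k < 1/2 then 0 else 2)"
      by (simp add: y_def digit_def)
    then show ?case using cantor_approx_Suc_branch[OF Suc] by simp
  qed
  have step: "y n / 3^n = real (digit (y n)) / 3 ^ Suc n + y (Suc n) / 3 ^ Suc n" for n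
    by (simp add: y_def field_simps)
  have partial: "x = (\<Sum>i<n. real (digit (y i)) / 3 ^ Suc i) + y n / 3^n" for n
    by (induction n) (simp_all add: y_def[of 0] step)
  have "(\<lambda>n. y n / 3^n) \<longlonglongrightarrow> 0"
  proof (rule Lim_null_comparison)
    have "\<bar>y n\<bar> / 3^n \<le> (5/4) / 3^n" for n
      using y_approx[of n 0] by (intro divide_right_mono) auto
    then show "\<forall>\<^sub>F n in sequentially. norm (y n / 3^n) \<le> (5/4) * (1/3::real)^n"
      by (intro always_eventually allI) (simp add: power_one_over)
    show "(\<lambda>n. (5/4) * (1/3::real)^n) \<longlonglongrightarrow> 0"
      by (intro tendsto_mult_right_zero LIMSEQ_power_zero) simp
  qed
  then have "(\<lambda>n. x - y n / 3^n) \<longlonglongrightarrow> x"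
    using tendsto_diff[OF tendsto_const[of x]] by fastforce
  moreover have "(\<lambda>n. x - y n / 3^n) = (\<lambda>n. \<Sum>i<n. real (digit (y i)) / 3 ^ Suc i)"
    using partial by (metis add_diff_cancel_right')
  ultimately have "(\<lambda>i. real (digit (y i)) / 3 ^ Suc i) sums x"
    unfolding sums_def by simp
  moreover have "cantor_digits (\<lambda>i. digit (y i))" by (simp add: cantor_digits_def digit_def)
  ultimately show "x \<in> cantor_set"
    unfolding cantor_set_iff ternary_value_def by (auto simp: sums_iff)
qed

lemma cantor_set_eq_INT_cantor_approx: "cantor_set = (\<Inter>n. cantor_approx n)"
  using cantor_set_subset_cantor_approx INT_cantor_approx_subset by blast

lemma cantor_approx_borel: "cantor_approx n \<in> sets borel"
proof (induction n)
  case (Suc n)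
  have "cantor_approx (Suc n) = (\<lambda>x::real. 3*x) -` cantor_approx n \<union> (\<lambda>x. 3*x - 2) -` cantor_approx n"
    by auto
  also have "\<dots> \<in> sets borel"
    using Suc by (intro sets.Un measurable_sets_borel[of _ borel]) auto
  finally show ?case .
qed simp

lemma cantor_set_borel[measurable]: "cantor_set \<in> sets borel"
  unfolding cantor_set_eq_INT_cantor_approx using cantor_approx_borel by auto

primrec cantor_endpoints :: "nat \<Rightarrow> real list" where
  "cantor_endpoints 0 = [0]"
| "cantor_endpoints (Suc n) = cantor_endpoints n @ map (\<lambda>w. w + 2 / 3 ^ Suc n) (cantor_endpoints n)"

lemma length_cantor_endpoints: "length (cantor_endpoints n) = 2 ^ n"
  by (induction n) auto

lemma ternary_partial_sum_in_cantor_endpoints: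
  assumes "cantor_digits d"
  shows "(\<Sum>i<n. real (d i) / 3 ^ Suc i) \<in> set (cantor_endpoints n)"
proof (induction n)
  case (Suc n)
  have "d n = 0 \<or> d n = 2" using assms unfolding cantor_digits_def by blast
  then show ?case using Suc by auto
qed simp

lemma ternary_value_partial_sum_bounds:
  fixes n :: nat
  assumes d: "cantor_digits d"
  defines "p \<equiv> \<Sum>i<n. real (d i) / 3 ^ Suc i"
  shows "p \<le> ternary_value d" "ternary_value d \<le> p + 1 / 3^n"
proof -
  have dn: "cantor_digits (\<lambda>k. d (k + n))" using d unfolding cantor_digits_def by blast
  have "(\<Sum>k. real (d (k + n)) / 3 ^ Suc (k + n)) = (\<Sum>k. real (d (k + n)) / 3 ^ Suc k / 3^n)"
    by (simp add: power_add mult_ac)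
  also have "\<dots> = ternary_value (\<lambda>k. d (k + n)) / 3^n"
    unfolding ternary_value_def by (rule suminf_divide[OF summable_ternary[OF dn]])
  finally have "ternary_value d = ternary_value (\<lambda>k. d (k + n)) / 3^n + p"
    unfolding p_def using suminf_split_initial_segment[OF summable_ternary[OF d], of n]
    by (simp add: ternary_value_def)
  then show "p \<le> ternary_value d" "ternary_value d \<le> p + 1 / 3^n"
    using ternary_value_bounds[OF dn] by (simp_all add: divide_right_mono)
qed

lemma hausdorff_outer_cantor_set_le_1: "hausdorff_outer (log 3 2) cantor_set \<le> 1"
  unfolding hausdorff_outer_def
proof (rule SUP_least)
  fix \<delta> :: real assume "\<delta> \<in> {0<..}"
  then obtain n :: nat where n: "(1/3::real)^n < \<delta>"
    using real_arch_pow_inv[of \<delta> "1/3"] by auto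
  define L where "L = cantor_endpoints n"
  define U where "U i = (if i < 2^n then {L!i .. L!i + 1/3^n} else {})" for i
  have "cantor_set \<subseteq> (\<Union>i. U i)"
  proof
    fix x assume "x \<in> cantor_set"
    then obtain d where d: "cantor_digits d" "x = ternary_value d"
      unfolding cantor_set_iff by blast
    obtain i where "i < 2^n" "L!i = (\<Sum>i<n. real (d i) / 3 ^ Suc i)"
      using ternary_partial_sum_in_cantor_endpoints[OF d(1), of n]
      by (metis L_def in_set_conv_nth length_cantor_endpoints)
    then have "x \<in> U i" using ternary_value_partial_sum_bounds[OF d(1), of n] d(2) by (simp add: U_def)
    then show "x \<in> (\<Union>i. U i)" by blast
  qed
  moreover have "\<forall>i. bounded (U i) \<and> diameter (U i) \<le> \<delta>"
    using n \<open>\<delta> \<in> {0<..}\<close> by (auto simp: U_def power_one_over)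
  ultimately have "hausdorff_delta (log 3 2) \<delta> cantor_set \<le> (\<Sum>i. ennreal (diameter (U i) powr log 3 2))"
    unfolding hausdorff_delta_def by (intro INF_lower) blast
  also have "\<dots> = (\<Sum>i<2^n. ennreal (diameter (U i) powr log 3 2))"
    by (rule suminf_finite) (auto simp: U_def)
  also have "\<dots> = (\<Sum>i<(2::nat)^n. ennreal ((1/2)^n))"
  proof (rule sum.cong)
    have "(1/3^n :: real) = (1/3) powr real n" by (simp add: powr_realpow power_one_over)
    then have "(1/3^n :: real) powr log 3 2 = ((1/3) powr log 3 2) powr real n"
      by (simp add: powr_powr mult.commute)
    also have "\<dots> = (1/2)^n" by (simp add: powr_divide powr_realpow power_one_over)
    finally show "ennreal (diameter (U i) powr log 3 2) = ennreal ((1/2)^n)" if "i \<in> {..<2^n}" for i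
      using that by (simp add: U_def)
  qed simp
  also have "\<dots> = 1"
    by (simp add: ennreal_of_nat_eq_real_of_nat ennreal_mult[symmetric] power_mult_distrib[symmetric])
  finally show "hausdorff_delta (log 3 2) \<delta> cantor_set \<le> 1" .
qed

section \<open>The measure \<open>cantor_measure\<close>\<close>

definition triadic :: "real \<Rightarrow> bool" where
  "triadic q \<longleftrightarrow> (\<exists>k::int. \<exists>m::nat. q = of_int k / 3^m)"

lemma triadic_iff_powi: "triadic q \<longleftrightarrow> (\<exists>k n::int. q = of_int k / 3 powi n)"
proof
  assume "triadic q"
  then obtain k m where "q = of_int k / 3^m" unfolding triadic_def by blast
  then have "q = of_int k / 3 powi (int m)" by (simp add: power_int_def)
  then show "\<exists>k n::int. q = of_int k / 3 powi n" by blast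
next
  assume "\<exists>k n::int. q = of_int k / 3 powi n"
  then obtain k n where q: "q = of_int k / 3 powi n" by blast
  show "triadic q"
  proof (cases "n \<ge> 0")
    case True
    then have "q = of_int k / 3 ^ nat n" using q by (simp add: power_int_def)
    then show ?thesis unfolding triadic_def by blast
  next
    case False
    then have "q = of_int (k * 3 ^ nat (-n)) / 3^0" using q by (simp add: power_int_def field_simps)
    then show ?thesis unfolding triadic_def by blast
  qed
qed

lemma cantor_R_iff: "y \<in> cantor_R \<longleftrightarrow> (\<exists>x\<in>cantor_set. \<exists>q. triadic q \<and> y = x + q)"
proof -
  have "y \<in> cantor_R \<longleftrightarrow> (\<exists>k n::int. \<exists>x\<in>cantor_set. y = x + of_int k / 3 powi n)"
    unfolding cantor_R_def by auto
  then show ?thesis unfolding triadic_iff_powi by blast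
qed

lemma triadic_divide3: "triadic q \<Longrightarrow> triadic (q/3)"
  unfolding triadic_def by (metis divide_divide_eq_left power_Suc2 mult.commute)

lemma triadic_mult3: "triadic q \<Longrightarrow> triadic (3*q)"
  unfolding triadic_def by (metis of_int_mult of_int_numeral times_divide_eq_right)

lemma triadic_add_int: "triadic q \<Longrightarrow> triadic (q + of_int j)"
proof -
  assume "triadic q"
  then obtain k m where "q = of_int k / 3^m" unfolding triadic_def by blast
  then have "q + of_int j = of_int (k + j * 3^m) / 3^m" by (simp add: field_simps)
  then show ?thesis unfolding triadic_def by blast
qed

lemma cantor_R_divide3_iff: "y/3 \<in> cantor_R \<longleftrightarrow> y \<in> cantor_R"
proof
  assume "y/3 \<in> cantor_R"
  then obtain x q where xq: "x \<in> cantor_set" "triadic q" "y/3 = x + q"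
    unfolding cantor_R_iff by blast
  obtain a :: int where a: "a = 0 \<or> a = 2" "3*x - of_int a \<in> cantor_set"
    using xq(1) cantor_set_self_similar[of x] by (metis diff_zero of_int_0 of_int_numeral)
  have "triadic (3*q + of_int a)" using xq(2) by (intro triadic_add_int triadic_mult3)
  moreover have "y = (3*x - of_int a) + (3*q + of_int a)" using xq(3) by simp
  ultimately show "y \<in> cantor_R" unfolding cantor_R_iff using a(2) by blast
next
  assume "y \<in> cantor_R"
  then obtain x q where xq: "x \<in> cantor_set" "triadic q" "y = x + q"
    unfolding cantor_R_iff by blast
  have "x/3 \<in> cantor_set" using xq(1) cantor_set_self_similar[of "x/3"] by simp
  moreover have "triadic (q/3)" using xq(2) by (rule triadic_divide3)
  moreover have "y/3 = x/3 + q/3" using xq(3) by simp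
  ultimately show "y/3 \<in> cantor_R" unfolding cantor_R_iff by blast
qed

lemma cantor_R_add_int_iff: "y + of_int j \<in> cantor_R \<longleftrightarrow> y \<in> cantor_R"
proof -
  have "y + of_int j \<in> cantor_R" if "y \<in> cantor_R" for y j
    using that unfolding cantor_R_iff by (metis add.assoc triadic_add_int)
  from this[of y j] this[of "y + of_int j" "-j"] show ?thesis by auto
qed

lemma cantor_set_subset_cantor_R: "cantor_set \<subseteq> cantor_R"
proof
  fix x assume "x \<in> cantor_set"
  moreover have "triadic 0" unfolding triadic_def by force
  ultimately show "x \<in> cantor_R" unfolding cantor_R_iff by force
qed

lemma sets_cantor_measure[measurable_cong]: "sets cantor_measure = sets borel"
  unfolding cantor_measure_def using sets.sigma_sets_eq[of borel] by (simp add: sets_measure_of_conv)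

lemma space_cantor_measure[simp]: "space cantor_measure = UNIV"
  unfolding cantor_measure_def by (simp add: space_measure_of_conv)

lemma emeasure_cantor_measure:
  assumes "A \<in> sets borel"
  shows "emeasure cantor_measure A =
    (if measure_space UNIV (sets borel) (\<lambda>A. hausdorff_outer (log 3 2) (A \<inter> cantor_R))
     then hausdorff_outer (log 3 2) (A \<inter> cantor_R) else 0)"
proof -
  have "sigma_sets UNIV (sets borel) = (sets borel :: real set set)"
    using sets.sigma_sets_eq[of borel] by simp
  then show ?thesis using assms unfolding cantor_measure_def emeasure_measure_of_conv by simp
qed

lemma cantor_R_affine_invariant:
  "3*x - of_int j \<in> cantor_R \<longleftrightarrow> x \<in> cantor_R"
  "x - of_int j \<in> cantor_R \<longleftrightarrow> x \<in> cantor_R"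
  "x/3 \<in> cantor_R \<longleftrightarrow> x \<in> cantor_R"
  using cantor_R_add_int_iff[of "3*x" "-j"] cantor_R_add_int_iff[of x "-j"]
    cantor_R_divide3_iff[of "3*x"] cantor_R_divide3_iff[of x]
  by auto

locale cantor_R_similarity =
  fixes c t :: real
  assumes pos: "c > 0"
    and invariant: "\<And>x. c*x + t \<in> cantor_R \<longleftrightarrow> x \<in> cantor_R"
begin

lemma borel_measurable_affine[measurable]: "(\<lambda>x. c*x + t) \<in> borel_measurable borel"
  by simp

lemma emeasure_vimage:
  assumes A: "A \<in> sets borel"
  shows "emeasure cantor_measure ((\<lambda>x. c*x + t) -` A)
    = ennreal ((1/c) powr log 3 2) * emeasure cantor_measure A"
proof -
  have "(\<lambda>x. c*x + t) -` A \<inter> cantor_R = (\<lambda>x. (1/c)*x + (-t/c)) ` (A \<inter> cantor_R)"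
  proof (intro equalityI subsetI)
    fix x assume "x \<in> (\<lambda>x. c*x + t) -` A \<inter> cantor_R"
    then have "c*x + t \<in> A \<inter> cantor_R" using invariant by simp
    moreover have "x = (1/c)*(c*x + t) + (-t/c)" using pos by (simp add: field_simps)
    ultimately show "x \<in> (\<lambda>x. (1/c)*x + (-t/c)) ` (A \<inter> cantor_R)" by (rule rev_image_eqI)
  next
    fix x assume "x \<in> (\<lambda>x. (1/c)*x + (-t/c)) ` (A \<inter> cantor_R)"
    then obtain y where "y \<in> A \<inter> cantor_R" "x = (1/c)*y + (-t/c)" by auto
    moreover from this have "c*x + t = y" using pos by (simp add: field_simps)
    ultimately show "x \<in> (\<lambda>x. c*x + t) -` A \<inter> cantor_R" using invariant[of x] by simp
  qed
  then have "hausdorff_outer (log 3 2) ((\<lambda>x. c*x + t) -` A \<inter> cantor_R)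
      = ennreal ((1/c) powr log 3 2) * hausdorff_outer (log 3 2) (A \<inter> cantor_R)"
    using pos by (simp only:) (rule hausdorff_outer_affine_image, simp)
  moreover have "(\<lambda>x. c*x + t) -` A \<in> sets borel"
    using measurable_sets_borel[OF borel_measurable_affine A] .
  ultimately show ?thesis using A by (simp add: emeasure_cantor_measure)
qed

lemma distr_eq_density:
  "distr cantor_measure borel (\<lambda>x. c*x + t) = density cantor_measure (\<lambda>_. ennreal ((1/c) powr log 3 2))"
proof (rule measure_eqI)
  fix A assume "A \<in> sets (distr cantor_measure borel (\<lambda>x. c*x + t))"
  then have A: "A \<in> sets borel" by simp
  have "emeasure (distr cantor_measure borel (\<lambda>x. c*x + t)) A
      = emeasure cantor_measure ((\<lambda>x. c*x + t) -` A)"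
    using A by (simp add: emeasure_distr)
  also have "\<dots> = emeasure (density cantor_measure (\<lambda>_. ennreal ((1/c) powr log 3 2))) A"
    using A by (simp add: emeasure_vimage emeasure_density nn_integral_cmult_indicator)
  finally show "emeasure (distr cantor_measure borel (\<lambda>x. c*x + t)) A
      = emeasure (density cantor_measure (\<lambda>_. ennreal ((1/c) powr log 3 2))) A" .
qed (simp add: sets_cantor_measure)

lemma integral_compose:
  fixes f :: "real \<Rightarrow> 'b::{banach, second_countable_topology}"
  assumes [measurable]: "f \<in> borel_measurable borel"
  shows "(\<integral>x. f (c*x + t) \<partial>cantor_measure) = ((1/c) powr log 3 2) *\<^sub>R (\<integral>x. f x \<partial>cantor_measure)"
proof -
  have "(\<integral>x. f (c*x + t) \<partial>cantor_measure) = integral\<^sup>L (distr cantor_measure borel (\<lambda>x. c*x + t)) f"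
    by (simp add: integral_distr)
  also have "\<dots> = ((1/c) powr log 3 2) *\<^sub>R (\<integral>x. f x \<partial>cantor_measure)"
    by (simp add: distr_eq_density integral_density)
  finally show ?thesis .
qed

lemma integrable_compose_iff:
  fixes f :: "real \<Rightarrow> 'b::{banach, second_countable_topology}"
  assumes [measurable]: "f \<in> borel_measurable borel"
  shows "integrable cantor_measure (\<lambda>x. f (c*x + t)) \<longleftrightarrow> integrable cantor_measure f"
proof -
  have "integrable cantor_measure (\<lambda>x. f (c*x + t))
      \<longleftrightarrow> integrable (distr cantor_measure borel (\<lambda>x. c*x + t)) f"
    by (simp add: integrable_distr_eq)
  also have "\<dots> \<longleftrightarrow> integrable cantor_measure (\<lambda>x. ((1/c) powr log 3 2) *\<^sub>R f x)"
    unfolding distr_eq_density by (rule integrable_density) auto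
  also have "\<dots> \<longleftrightarrow> integrable cantor_measure f"
  proof
    assume "integrable cantor_measure (\<lambda>x. ((1/c) powr log 3 2) *\<^sub>R f x)"
    from integrable_scaleR_right[OF this, of "1 / (1/c) powr log 3 2"]
    show "integrable cantor_measure f" using pos by simp
  qed simp
  finally show ?thesis .
qed

lemma AE_compose:
  assumes "AE y in cantor_measure. P y"
  shows "AE x in cantor_measure. P (c*x + t)"
proof -
  obtain N where N: "{y. \<not> P y} \<subseteq> N" "emeasure cantor_measure N = 0" "N \<in> sets borel"
    using assms by (elim AE_E) (simp add: sets_cantor_measure)
  have "(\<lambda>x. c*x + t) -` N \<in> null_sets cantor_measure"
    using N(2,3) measurable_sets_borel[OF borel_measurable_affine N(3)]
    by (simp add: null_sets_def emeasure_vimage sets_cantor_measure)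
  moreover have "{x \<in> space cantor_measure. \<not> P (c*x + t)} \<subseteq> (\<lambda>x. c*x + t) -` N"
    using N(1) by auto
  ultimately show ?thesis by (rule AE_I')
qed

end

interpretation scale3: cantor_R_similarity 3 0
  by unfold_locales (use cantor_R_affine_invariant(1)[of _ 0] in simp_all)

interpretation scale3_shift2: cantor_R_similarity 3 "-2"
  by unfold_locales (use cantor_R_affine_invariant(1)[of _ 2] in simp_all)

interpretation divide3: cantor_R_similarity "1/3" 0
  by unfold_locales (use cantor_R_affine_invariant(3) in simp_all)

interpretation shift2: cantor_R_similarity 1 "-2"
  by unfold_locales (use cantor_R_affine_invariant(2)[of _ 2] in simp_all)

lemma in_L2_iff:
  "in_L2 f \<longleftrightarrow> f \<in> borel_measurable borel \<and> integrable cantor_measure (\<lambda>x. (cmod (f x))\<^sup>2)"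
proof -
  have "measurable cantor_measure (borel :: complex measure) = measurable borel borel"
    by (rule measurable_cong_sets[OF sets_cantor_measure refl])
  then show ?thesis unfolding in_L2_def by simp
qed

lemma in_L2_borel_measurable[measurable_dest]: "in_L2 f \<Longrightarrow> f \<in> borel_measurable borel"
  by (simp add: in_L2_iff)

lemma L2_norm_sq_nonneg: "0 \<le> L2_norm_sq f"
  unfolding L2_norm_sq_def by simp

lemma norm_add_squared_le:
  fixes a b :: "'a::real_normed_vector"
  shows "(norm (a + b))\<^sup>2 \<le> 2 * (norm a)\<^sup>2 + 2 * (norm b)\<^sup>2"
proof -
  have "(norm (a + b))\<^sup>2 \<le> (norm a + norm b)\<^sup>2"
    by (simp add: norm_triangle_ineq power_mono)
  also have "\<dots> \<le> 2 * (norm a)\<^sup>2 + 2 * (norm b)\<^sup>2"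
    using sum_squares_bound[of "norm a" "norm b"] by (simp add: power2_eq_square algebra_simps)
  finally show ?thesis .
qed

lemma in_L2_add:
  assumes "in_L2 f" "in_L2 g"
  shows "in_L2 (\<lambda>x. f x + g x)"
  unfolding in_L2_iff
proof
  show [measurable]: "(\<lambda>x. f x + g x) \<in> borel_measurable borel" using assms by measurable
  have "integrable cantor_measure (\<lambda>x. 2 * (cmod (f x))\<^sup>2 + 2 * (cmod (g x))\<^sup>2)"
    using assms by (simp add: in_L2_iff)
  then show "integrable cantor_measure (\<lambda>x. (cmod (f x + g x))\<^sup>2)"
    by (rule Bochner_Integration.integrable_bound) (auto simp: norm_add_squared_le)
qed

lemma in_L2_diff:
  assumes "in_L2 f" "in_L2 g"
  shows "in_L2 (f - g)"
proof -
  have "in_L2 (\<lambda>x. - g x)" using assms(2) by (simp add: in_L2_iff)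
  from in_L2_add[OF assms(1) this] show ?thesis by (simp add: fun_diff_def)
qed

lemma L2_norm_sq_cong_AE:
  assumes "in_L2 f" "in_L2 g" "AE x in cantor_measure. f x = g x"
  shows "L2_norm_sq f = L2_norm_sq g"
  unfolding L2_norm_sq_def using assms by (intro integral_cong_AE) auto

lemma L2_norm_sq_eq_0_iff:
  assumes "in_L2 f"
  shows "L2_norm_sq f = 0 \<longleftrightarrow> (AE x in cantor_measure. f x = 0)"
  using assms unfolding L2_norm_sq_def in_L2_iff
  by (subst integral_nonneg_eq_0_iff_AE) auto

lemma L2_norm_sq_diff_le:
  assumes "in_L2 f" "in_L2 g" "in_L2 h"
  shows "L2_norm_sq (f - g) \<le> 2 * L2_norm_sq (f - h) + 2 * L2_norm_sq (g - h)"
proof -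
  have int: "integrable cantor_measure (\<lambda>x. (cmod (u x - v x))\<^sup>2)" if "in_L2 u" "in_L2 v" for u v
    using in_L2_diff[OF that] by (simp add: in_L2_iff)
  have "L2_norm_sq (f - g)
      \<le> (\<integral>x. 2 * (cmod (f x - h x))\<^sup>2 + 2 * (cmod (g x - h x))\<^sup>2 \<partial>cantor_measure)"
    unfolding L2_norm_sq_def
  proof (rule integral_mono)
    show "(cmod ((f - g) x))\<^sup>2 \<le> 2 * (cmod (f x - h x))\<^sup>2 + 2 * (cmod (g x - h x))\<^sup>2" for x
      using norm_add_squared_le[of "f x - h x" "h x - g x"] by (simp add: norm_minus_commute)
  qed (use assms int in auto)
  also have "\<dots> = 2 * L2_norm_sq (f - h) + 2 * L2_norm_sq (g - h)"
    unfolding L2_norm_sq_def using assms int by simp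
  finally show ?thesis .
qed

context cantor_R_similarity
begin

lemma in_L2_compose:
  assumes "in_L2 f"
  shows "in_L2 (\<lambda>x. f (c*x + t))"
    and "L2_norm_sq (\<lambda>x. f (c*x + t)) = (1/c) powr log 3 2 * L2_norm_sq f"
proof -
  have [measurable]: "f \<in> borel_measurable borel" using assms by measurable
  show "in_L2 (\<lambda>x. f (c*x + t))"
    using assms integrable_compose_iff[of "\<lambda>y. (cmod (f y))\<^sup>2"] by (simp add: in_L2_iff)
  show "L2_norm_sq (\<lambda>x. f (c*x + t)) = (1/c) powr log 3 2 * L2_norm_sq f"
    unfolding L2_norm_sq_def using integral_compose[of "\<lambda>y. (cmod (f y))\<^sup>2"] by simp
qed

end

section \<open>The cascade operator\<close>

definition supported_on :: "real set \<Rightarrow> (real \<Rightarrow> 'a::zero) \<Rightarrow> bool" where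
  "supported_on A f \<longleftrightarrow> (\<forall>x. x \<notin> A \<longrightarrow> f x = 0)"

lemma supported_on_mono: "supported_on A f \<Longrightarrow> A \<subseteq> B \<Longrightarrow> supported_on B f"
  unfolding supported_on_def by blast

lemma supported_on_diff:
  fixes f g :: "real \<Rightarrow> 'a::group_add"
  shows "supported_on A f \<Longrightarrow> supported_on A g \<Longrightarrow> supported_on A (f - g)"
  unfolding supported_on_def by simp

lemma supported_on_cascade:
  "supported_on A f \<Longrightarrow> supported_on {x. 3*x \<in> A \<or> 3*x - 2 \<in> A} (cascade f)"
  unfolding supported_on_def cascade_def by auto

lemma supported_on_cascade_pow_cantor_approx:
  "supported_on {-1/4..5/4} f \<Longrightarrow> supported_on (cantor_approx n) ((cascade ^^ n) f)"
  by (induction n) (auto dest: supported_on_cascade)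

lemma supported_on_cascade_pow_shrinking:
  assumes "supported_on {-r..1+r} f"
  shows "supported_on {-(r/3^n)..1 + r/3^n} ((cascade ^^ n) f)"
proof (induction n)
  case (Suc n)
  have "{x. 3*x \<in> {-e..1+e} \<or> 3*x - 2 \<in> {-e..1+e}} \<subseteq> {-(e/3)..1 + e/3}" for e :: real
    by auto
  from supported_on_mono[OF supported_on_cascade[OF Suc] this] show ?case by (simp add: mult.commute)
qed (use assms in simp)

lemma cascade_diff: "cascade (f - g) = cascade f - cascade g"
  unfolding cascade_def by (simp add: fun_eq_iff)

lemma cascade_pow_diff: "(cascade ^^ n) (f - g) = (cascade ^^ n) f - (cascade ^^ n) g"
  by (induction n) (simp_all only: funpow.simps o_apply id_apply cascade_diff)

lemma cascade_multiple_indicator_cantor_set: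
  "cascade (\<lambda>x. a * indicator cantor_set x) = (\<lambda>x. a * indicator cantor_set x)"
  unfolding cascade_def
  by (simp add: distrib_left[symmetric] indicator_cantor_set_self_similar)

lemma in_L2_cascade:
  assumes "in_L2 f"
  shows "in_L2 (cascade f)"
  unfolding cascade_def
  using in_L2_add[OF scale3.in_L2_compose(1)[OF assms] scale3_shift2.in_L2_compose(1)[OF assms]]
  by simp

lemma in_L2_cascade_pow: "in_L2 f \<Longrightarrow> in_L2 ((cascade ^^ n) f)"
  by (induction n) (auto intro: in_L2_cascade)

text \<open>On functions supported in \<open>[-1/4, 5/4]\<close> the two terms of \<open>cascade f\<close> have disjoint
  supports, and each carries half of the mass because \<open>(1/3) powr log 3 2 = 1/2\<close>.\<close>
lemma L2_norm_sq_cascade: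
  assumes f: "in_L2 f" and supp: "supported_on {-1/4..5/4} f"
  shows "L2_norm_sq (cascade f) = L2_norm_sq f"
proof -
  have "(cmod (cascade f x))\<^sup>2 = (cmod (f (3*x)))\<^sup>2 + (cmod (f (3*x - 2)))\<^sup>2" for x
    using supp unfolding cascade_def supported_on_def
    by (cases "3*x \<in> {-1/4..5/4}") auto
  then have "L2_norm_sq (cascade f) = L2_norm_sq (\<lambda>x. f (3*x + 0)) + L2_norm_sq (\<lambda>x. f (3*x + -2))"
    using scale3.in_L2_compose(1)[OF f] scale3_shift2.in_L2_compose(1)[OF f]
    unfolding L2_norm_sq_def in_L2_iff by simp
  also have "\<dots> = L2_norm_sq f"
    using scale3.in_L2_compose(2)[OF f] scale3_shift2.in_L2_compose(2)[OF f]
    by (simp add: powr_divide)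
  finally show ?thesis .
qed

lemma cascade_cong_AE:
  assumes "AE x in cantor_measure. f x = g x"
  shows "AE x in cantor_measure. cascade f x = cascade g x"
  using scale3.AE_compose[OF assms] scale3_shift2.AE_compose[OF assms]
  unfolding cascade_def by eventually_elim simp

lemma cascade_pow_cong_AE:
  assumes "AE x in cantor_measure. f x = g x"
  shows "AE x in cantor_measure. (cascade ^^ n) f x = (cascade ^^ n) g x"
  by (induction n) (simp_all add: assms cascade_cong_AE)

text \<open>If \<open>\<delta> y + \<delta> (y - 2) = 0\<close> almost everywhere, then \<open>\<delta> y = \<plusminus>\<delta> (y - 2k)\<close> for all \<open>k\<close>,
  which vanishes for large \<open>k\<close> when the support of \<open>\<delta>\<close> is bounded below.\<close>
lemma AE_eq_0_if_cascade_AE_eq_0: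
  assumes supp: "supported_on {a..} \<delta>" and zero: "AE x in cantor_measure. cascade \<delta> x = 0"
  shows "AE x in cantor_measure. \<delta> x = 0"
proof -
  have base: "AE y in cantor_measure. \<delta> y + \<delta> (y - 2) = 0"
    using divide3.AE_compose[OF zero] unfolding cascade_def by simp
  have "AE y in cantor_measure. \<delta> (y - 2 * real k) + \<delta> (y - 2 * real k - 2) = 0" for k
  proof (induction k)
    case (Suc k)
    from shift2.AE_compose[OF Suc.IH] show ?case by eventually_elim (simp add: algebra_simps)
  qed (use base in simp)
  then have "AE y in cantor_measure. \<forall>k. \<delta> (y - 2 * real k) + \<delta> (y - 2 * real k - 2) = 0"
    by (simp add: AE_all_countable)
  then show ?thesis
  proof eventually_elim
    fix y assume h: "\<forall>k. \<delta> (y - 2 * real k) + \<delta> (y - 2 * real k - 2) = 0"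
    have alternating: "\<delta> y = (-1)^k * \<delta> (y - 2 * real k)" for k
    proof (induction k)
      case (Suc k)
      have "\<delta> (y - 2 * real (Suc k)) = - \<delta> (y - 2 * real k)"
        using h[rule_format, of k] by (simp add: algebra_simps eq_neg_iff_add_eq_0)
      then show ?case using Suc by simp
    qed simp
    obtain k :: nat where "real k > (y - a) / 2" using reals_Archimedean2 by blast
    then have "\<delta> (y - 2 * real k) = 0" using supp unfolding supported_on_def by auto
    then show "\<delta> y = 0" using alternating[of k] by simp
  qed
qed

lemma AE_eq_0_if_cascade_pow_AE_eq_0:
  assumes "a \<le> 0" "supported_on {a..} \<delta>" "AE x in cantor_measure. (cascade ^^ n) \<delta> x = 0"
  shows "AE x in cantor_measure. \<delta> x = 0"
  using assms(2,3)
proof (induction n arbitrary: \<delta>)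
  case (Suc n)
  have "supported_on {a..} (cascade \<delta>)"
    using supported_on_cascade[OF Suc.prems(1)] assms(1) by (auto elim!: supported_on_mono)
  moreover have "AE x in cantor_measure. (cascade ^^ n) (cascade \<delta>) x = 0"
    using Suc.prems(2) by (simp add: funpow_Suc_right del: funpow.simps)
  ultimately show ?case using Suc.IH AE_eq_0_if_cascade_AE_eq_0[OF Suc.prems(1)] by blast
qed simp

section \<open>Fixed points of the cascade operator\<close>

lemma integrable_if_square_integrable_on_finite:
  fixes f :: "'a \<Rightarrow> 'b::{banach, second_countable_topology}"
  assumes [measurable]: "f \<in> borel_measurable M" and sq: "integrable M (\<lambda>x. (norm (f x))\<^sup>2)"
    and A: "A \<in> sets M" "emeasure M A < \<infinity>" and supp: "AE x in M. x \<notin> A \<longrightarrow> f x = 0"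
  shows "integrable M f"
proof (rule Bochner_Integration.integrable_bound)
  show "integrable M (\<lambda>x. indicator A x + (norm (f x))\<^sup>2 :: real)"
    using integrable_real_indicator[OF A] sq by simp
  have le_square: "t \<le> 1 + t\<^sup>2" for t :: real
  proof -
    have "0 \<le> (t - 1/2)\<^sup>2" by simp
    then show ?thesis by (simp add: power2_eq_square algebra_simps)
  qed
  show "AE x in M. norm (f x) \<le> norm (indicator A x + (norm (f x))\<^sup>2 :: real)"
    using supp by eventually_elim (auto simp: indicator_def le_square)
qed simp

lemma cascade_fixed_point_vanishes_off_cantor_set:
  assumes supp: "supported_on {-1/4..5/4} \<eta>" and fixed: "AE x in cantor_measure. cascade \<eta> x = \<eta> x"
  shows "AE x in cantor_measure. x \<notin> cantor_set \<longrightarrow> \<eta> x = 0"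
proof -
  have "AE x in cantor_measure. (cascade ^^ n) \<eta> x = \<eta> x" for n
  proof (induction n)
    case (Suc n)
    from cascade_cong_AE[OF Suc] fixed show ?case by eventually_elim simp
  qed simp
  then have "AE x in cantor_measure. \<forall>n. (cascade ^^ n) \<eta> x = \<eta> x"
    by (simp add: AE_all_countable)
  then show ?thesis
  proof eventually_elim
    case (elim x)
    show ?case
    proof
      assume "x \<notin> cantor_set"
      then obtain n where "x \<notin> cantor_approx n" unfolding cantor_set_eq_INT_cantor_approx by blast
      then show "\<eta> x = 0"
        using elim supported_on_cascade_pow_cantor_approx[OF supp, of n]
        unfolding supported_on_def by metis
    qed
  qed
qed

lemma set_integral_atMost_cascade_fixed:
  fixes f :: "real \<Rightarrow> complex"
  assumes [measurable]: "f \<in> borel_measurable borel" and int: "integrable cantor_measure f"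
    and fixed: "AE x in cantor_measure. cascade f x = f x"
  defines "F \<equiv> \<lambda>t. set_lebesgue_integral cantor_measure {..t} f"
  shows "F t = (1/2) *\<^sub>R (F (3*t) + F (3*t - 2))"
proof -
  define h where "h s y = indicator {..s} y *\<^sub>R f y" for s y
  have h_meas[measurable]: "h s \<in> borel_measurable borel" for s unfolding h_def by measurable
  have h_int: "integrable cantor_measure (h s)" for s
    unfolding h_def using int by (intro integrable_mult_indicator) (auto simp: sets_cantor_measure)
  have F_h: "F s = integral\<^sup>L cantor_measure (h s)" for s
    unfolding F_def h_def set_lebesgue_integral_def ..
  have "F t = (\<integral>x. h (3*t) (3*x + 0) + h (3*t - 2) (3*x + -2) \<partial>cantor_measure)"
    unfolding F_h
  proof (rule integral_cong_AE)
    show "AE x in cantor_measure. h t x = h (3*t) (3*x + 0) + h (3*t - 2) (3*x + -2)"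
      using fixed by eventually_elim (auto simp: h_def cascade_def indicator_def)
  qed simp_all
  also have "\<dots> = (\<integral>x. h (3*t) (3*x + 0) \<partial>cantor_measure) + (\<integral>x. h (3*t - 2) (3*x + -2) \<partial>cantor_measure)"
    using h_int scale3.integrable_compose_iff[OF h_meas] scale3_shift2.integrable_compose_iff[OF h_meas]
    by (intro Bochner_Integration.integral_add) auto
  also have "\<dots> = (1/2) *\<^sub>R (F (3*t) + F (3*t - 2))"
    unfolding F_h scale3.integral_compose[OF h_meas] scale3_shift2.integral_compose[OF h_meas]
    by (simp add: powr_divide scaleR_add_right)
  finally show ?thesis .
qed

text \<open>Iterating the functional equation gives \<open>\<bar>F t\<bar> \<le> K / 2^n\<close>, because for each \<open>t \<in> [0, 1)\<close>
  one of \<open>3t\<close>, \<open>3t - 2\<close> lies outside \<open>[0, 1)\<close>.\<close>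
lemma self_similar_bounded_eq_0:
  fixes F :: "real \<Rightarrow> 'a::real_normed_vector"
  assumes bound: "\<And>t. norm (F t) \<le> K"
    and left: "\<And>t. t < 0 \<Longrightarrow> F t = 0" and right: "\<And>t. 1 \<le> t \<Longrightarrow> F t = 0"
    and eq: "\<And>t. F t = (1/2) *\<^sub>R (F (3*t) + F (3*t - 2))"
  shows "F t = 0"
proof -
  have "0 \<le> K" using bound[of 0] norm_ge_zero order_trans by blast
  have decay: "norm (F t) \<le> K / 2^n" for n t
  proof (induction n arbitrary: t)
    case (Suc n)
    consider "t < 0 \<or> 1 \<le> t" | "0 \<le> t" "t < 1/2" | "1/2 \<le> t" "t < 1" by linarith
    then show ?case
    proof cases
      case 1 then show ?thesis using left right \<open>0 \<le> K\<close> by auto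
    next
      case 2
      then have "F t = (1/2) *\<^sub>R F (3*t)" using eq[of t] left[of "3*t - 2"] by simp
      then show ?thesis using Suc[of "3*t"] by (simp add: divide_right_mono)
    next
      case 3
      then have "F t = (1/2) *\<^sub>R F (3*t - 2)" using eq[of t] right[of "3*t"] by simp
      then show ?thesis using Suc[of "3*t - 2"] by (simp add: divide_right_mono)
    qed
  qed (simp add: bound)
  have "(\<lambda>n. K / 2^n) \<longlonglongrightarrow> 0"
    by (intro tendsto_divide_0[OF tendsto_const] filterlim_realpow_sequentially_gt1) simp
  then have "norm (F t) \<le> 0"
    by (rule tendsto_lowerbound) (simp_all add: decay)
  then show ?thesis by simp
qed

lemma set_integral_eq_0_if_atMost_eq_0:
  fixes f :: "real \<Rightarrow> 'b::{banach, second_countable_topology}"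
  assumes sets: "sets M = sets borel" and int: "integrable M f"
    and total: "(\<integral>x. f x \<partial>M) = 0" and zero: "\<And>t. set_lebesgue_integral M {..t} f = 0"
    and A: "A \<in> sets M"
  shows "set_lebesgue_integral M A f = 0"
proof -
  have sets_M: "B \<in> sets M" if "B \<in> sigma_sets UNIV (range atMost)" for B
    using that sets borel_eq_atMost by (metis sets_measure_of top_greatest Pow_UNIV)
  have "Int_stable (range atMost :: real set set)"
    unfolding Int_stable_def by (auto simp: Int_atMost)
  moreover have "range atMost \<subseteq> Pow (UNIV :: real set)" by simp
  moreover have "A \<in> sigma_sets UNIV (range atMost)"
    using A sets borel_eq_atMost by (metis sets_measure_of top_greatest Pow_UNIV)
  ultimately show ?thesis
  proof (induction rule: sigma_sets_induct_disjoint)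
    case (basic A)
    then show ?case using zero by auto
  next
    case empty
    then show ?case by (simp add: set_lebesgue_integral_def)
  next
    case (compl A)
    have "set_lebesgue_integral M (UNIV - A) f = (\<integral>x. f x - indicator A x *\<^sub>R f x \<partial>M)"
      unfolding set_lebesgue_integral_def
      by (rule Bochner_Integration.integral_cong) (auto simp: indicator_def)
    also have "\<dots> = (\<integral>x. f x \<partial>M) - set_lebesgue_integral M A f"
      unfolding set_lebesgue_integral_def
      using int integrable_mult_indicator[OF sets_M[OF compl(1)] int]
      by (rule Bochner_Integration.integral_diff)
    finally show ?case using compl(2) total by simp
  next
    case (union A)
    have A_sets: "A i \<in> sets M" for i using union(2) sets_M by blast
    then have "(\<Union>i. A i) \<in> sets M" by blast
    then have "set_lebesgue_integral M (\<Union>i. A i) f = (\<Sum>i. set_lebesgue_integral M (A i) f)"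
      using union(1) int A_sets
      by (intro lebesgue_integral_countable_add)
         (auto simp: disjoint_family_on_def set_integrable_def intro: integrable_mult_indicator)
    then show ?case using union(3) by simp
  qed
qed

lemma AE_eq_0_if_set_integrals_eq_0:
  fixes f :: "'a \<Rightarrow> complex"
  assumes int: "integrable M f" and zero: "\<And>A. A \<in> sets M \<Longrightarrow> set_lebesgue_integral M A f = 0"
  shows "AE x in M. f x = 0"
proof -
  have "set_lebesgue_integral M A (\<lambda>x. Re (f x)) = set_lebesgue_integral M A (\<lambda>x. 0)"
       "set_lebesgue_integral M A (\<lambda>x. Im (f x)) = set_lebesgue_integral M A (\<lambda>x. 0)"
    if A: "A \<in> sets M" for A
    using integral_Re[OF integrable_mult_indicator[OF A int]] integral_Im[OF integrable_mult_indicator[OF A int]]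
      zero[OF A]
    by (simp_all add: set_lebesgue_integral_def)
  then have "AE x in M. Re (f x) = 0" "AE x in M. Im (f x) = 0"
    using int by (auto intro!: density_unique_real)
  then show ?thesis by eventually_elim (simp add: complex_eq_iff)
qed

lemma emeasure_cantor_set_finite: "emeasure cantor_measure cantor_set < \<infinity>"
proof -
  have "emeasure cantor_measure cantor_set \<le> hausdorff_outer (log 3 2) cantor_set"
    using cantor_set_subset_cantor_R by (simp add: emeasure_cantor_measure Int_absorb2)
  also have "\<dots> \<le> 1" by (rule hausdorff_outer_cantor_set_le_1)
  finally show ?thesis by (simp add: le_less_trans)
qed

lemma cascade_fixed_point_mean_zero_eq_0:
  fixes f :: "real \<Rightarrow> complex"
  assumes [measurable]: "f \<in> borel_measurable borel" and int: "integrable cantor_measure f"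
    and mean: "(\<integral>x. f x \<partial>cantor_measure) = 0"
    and supp: "AE x in cantor_measure. x \<notin> cantor_set \<longrightarrow> f x = 0"
    and fixed: "AE x in cantor_measure. cascade f x = f x"
  shows "AE x in cantor_measure. f x = 0"
proof -
  define F where "F t = set_lebesgue_integral cantor_measure {..t} f" for t
  have F_above: "F t = 0" if "1 \<le> t" for t
  proof -
    have outside: "x \<notin> cantor_set" if "t < x" for x using that \<open>1 \<le> t\<close> cantor_set_bounds by force
    have "AE x in cantor_measure. indicator {..t} x *\<^sub>R f x = f x"
      using supp by eventually_elim (auto simp: indicator_def outside)
    then have "F t = (\<integral>x. f x \<partial>cantor_measure)"
      unfolding F_def set_lebesgue_integral_def by (intro integral_cong_AE) auto
    then show ?thesis using mean by simp
  qed
  have F_below: "F t = 0" if "t < 0" for t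
  proof -
    have outside: "x \<notin> cantor_set" if "x \<le> t" for x using that \<open>t < 0\<close> cantor_set_bounds by force
    have "AE x in cantor_measure. indicator {..t} x *\<^sub>R f x = 0"
      using supp by eventually_elim (auto simp: indicator_def outside)
    then show ?thesis unfolding F_def set_lebesgue_integral_def by (rule integral_eq_zero_AE)
  qed
  have "F t = 0" for t
  proof (rule self_similar_bounded_eq_0[OF _ F_below F_above])
    show "norm (F t) \<le> (\<integral>x. norm (f x) \<partial>cantor_measure)" for t
    proof -
      have "integrable cantor_measure (\<lambda>x. indicator {..t} x *\<^sub>R f x)"
        using int by (intro integrable_mult_indicator) (simp_all add: sets_cantor_measure)
      from integrable_norm[OF this] show ?thesis
        unfolding F_def set_lebesgue_integral_def
        using int by (intro order_trans[OF integral_norm_bound] integral_mono)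
           (auto simp: indicator_def)
    qed
    show "F t = (1/2) *\<^sub>R (F (3*t) + F (3*t - 2))" for t
      unfolding F_def by (rule set_integral_atMost_cascade_fixed[OF _ int fixed]) simp
  qed
  then have "set_lebesgue_integral cantor_measure A f = 0" if "A \<in> sets cantor_measure" for A
    using set_integral_eq_0_if_atMost_eq_0[OF sets_cantor_measure int mean _ that] by (simp add: F_def)
  then show ?thesis using AE_eq_0_if_set_integrals_eq_0[OF int] by blast
qed

lemma cascade_fixed_point:
  assumes L2: "in_L2 \<eta>" and supp: "supported_on {-1/4..5/4} \<eta>"
    and fixed: "AE x in cantor_measure. cascade \<eta> x = \<eta> x"
  shows "\<exists>a. AE x in cantor_measure. \<eta> x = a * indicator cantor_set x"
proof -
  have [measurable]: "\<eta> \<in> borel_measurable borel" using L2 by measurable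
  have supp_C: "AE x in cantor_measure. x \<notin> cantor_set \<longrightarrow> \<eta> x = 0"
    by (rule cascade_fixed_point_vanishes_off_cantor_set[OF supp fixed])
  show ?thesis
  proof (cases "emeasure cantor_measure cantor_set = 0")
    case True
    then have "cantor_set \<in> null_sets cantor_measure"
      using cantor_set_borel sets_cantor_measure by (simp add: null_sets_def)
    then have "AE x in cantor_measure. x \<notin> cantor_set" by (rule AE_not_in)
    with supp_C have "AE x in cantor_measure. \<eta> x = 0 * indicator cantor_set x"
      by eventually_elim simp
    then show ?thesis by blast
  next
    case False
    define m where "m = measure cantor_measure cantor_set"
    have "emeasure cantor_measure cantor_set = ennreal m"
      unfolding m_def using emeasure_cantor_set_finite by (simp add: emeasure_eq_ennreal_measure less_top)
    then have "m > 0"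
      using False unfolding m_def by (metis ennreal_0 measure_nonneg order_le_less)
    have C_sets: "cantor_set \<in> sets cantor_measure" by (simp add: sets_cantor_measure)
    have C_int: "integrable cantor_measure (indicator cantor_set :: real \<Rightarrow> real)"
      by (rule integrable_real_indicator[OF C_sets emeasure_cantor_set_finite])
    have \<eta>_int: "integrable cantor_measure \<eta>"
      using L2 unfolding in_L2_iff
      by (intro integrable_if_square_integrable_on_finite[OF _ _ C_sets emeasure_cantor_set_finite supp_C])
         simp_all
    define a where "a = (\<integral>x. \<eta> x \<partial>cantor_measure) / complex_of_real m"
    define f where "f x = \<eta> x - a * indicator cantor_set x" for x
    have aC: "(\<lambda>x. a * indicator cantor_set x) = (\<lambda>x. indicator cantor_set x *\<^sub>R a)"
      by (simp add: fun_eq_iff indicator_def)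
    have aC_int: "integrable cantor_measure (\<lambda>x. a * indicator cantor_set x)"
      unfolding aC using C_int by simp
    have "(\<integral>x. a * indicator cantor_set x \<partial>cantor_measure) = m *\<^sub>R a"
      unfolding aC using C_int by (simp add: m_def)
    then have "(\<integral>x. f x \<partial>cantor_measure) = 0"
      unfolding f_def using \<eta>_int aC_int \<open>m > 0\<close> by (simp add: a_def scaleR_conv_of_real)
    moreover have "AE x in cantor_measure. cascade f x = f x"
    proof -
      have "f = \<eta> - (\<lambda>x. a * indicator cantor_set x)" by (simp add: f_def fun_eq_iff)
      then have cascade_f: "cascade f = cascade \<eta> - (\<lambda>x. a * indicator cantor_set x)"
        by (simp only: cascade_diff cascade_multiple_indicator_cantor_set)
      show ?thesis using fixed by eventually_elim (simp add: cascade_f f_def)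
    qed
    moreover have "AE x in cantor_measure. x \<notin> cantor_set \<longrightarrow> f x = 0"
      using supp_C by eventually_elim (simp add: f_def)
    moreover have "f \<in> borel_measurable borel" unfolding f_def by measurable
    moreover have "integrable cantor_measure f"
      unfolding f_def using \<eta>_int aC_int by (rule Bochner_Integration.integrable_diff)
    ultimately have "AE x in cantor_measure. f x = 0"
      by (intro cascade_fixed_point_mean_zero_eq_0)
    then have "AE x in cantor_measure. \<eta> x = a * indicator cantor_set x"
      by eventually_elim (simp add: f_def)
    then show ?thesis by blast
  qed
qed

section \<open>Non-convergence of the cascade iterates\<close>

lemma supported_on_unit_neighbourhood_cascade:
  "supported_on {-1/4..5/4} f \<Longrightarrow> supported_on {-1/4..5/4} (cascade f)"
  using supported_on_cascade_pow_cantor_approx[of f 1] cantor_approx_subset[of 1]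
  by (auto intro: supported_on_mono)

lemma L2_norm_sq_cascade_pow:
  assumes "in_L2 f" "supported_on {-1/4..5/4} f"
  shows "L2_norm_sq ((cascade ^^ n) f) = L2_norm_sq f"
proof (induction n)
  case (Suc n)
  have "supported_on {-1/4..5/4} ((cascade ^^ n) f)"
    using supported_on_cascade_pow_cantor_approx[OF assms(2), of n] cantor_approx_subset[of n]
    by (auto intro: supported_on_mono)
  then show ?case
    using Suc L2_norm_sq_cascade[OF in_L2_cascade_pow[OF assms(1)]] by simp
qed simp

lemma L2_norm_sq_cascade_pow_step:
  assumes "in_L2 \<eta>" "supported_on {-1/4..5/4} \<eta>"
  shows "L2_norm_sq ((cascade ^^ Suc n) \<eta> - (cascade ^^ n) \<eta>) = L2_norm_sq (cascade \<eta> - \<eta>)"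
proof -
  have "(cascade ^^ Suc n) \<eta> - (cascade ^^ n) \<eta> = (cascade ^^ n) (cascade \<eta> - \<eta>)"
    by (simp only: cascade_pow_diff funpow_Suc_right o_apply)
  moreover have "in_L2 (cascade \<eta> - \<eta>)"
    using assms(1) by (intro in_L2_diff in_L2_cascade)
  moreover have "supported_on {-1/4..5/4} (cascade \<eta> - \<eta>)"
    using assms(2) by (intro supported_on_diff supported_on_unit_neighbourhood_cascade)
  ultimately show ?thesis by (simp add: L2_norm_sq_cascade_pow)
qed

lemma in_L2_restrict_support:
  assumes L2: "in_L2 \<xi>" and supp: "AE x in cantor_measure. B < \<bar>x\<bar> \<longrightarrow> \<xi> x = 0"
  obtains \<xi>\<^sub>0 r where "in_L2 \<xi>\<^sub>0" "0 \<le> r" "supported_on {-r..1+r} \<xi>\<^sub>0"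
    "AE x in cantor_measure. \<xi> x = \<xi>\<^sub>0 x"
proof
  define r where "r = \<bar>B\<bar>"
  define \<xi>\<^sub>0 where "\<xi>\<^sub>0 x = indicator {-r..1+r} x * \<xi> x" for x
  show "0 \<le> r" "supported_on {-r..1+r} \<xi>\<^sub>0"
    by (simp_all add: r_def \<xi>\<^sub>0_def supported_on_def)
  show ae: "AE x in cantor_measure. \<xi> x = \<xi>\<^sub>0 x"
    using supp by eventually_elim (auto simp: \<xi>\<^sub>0_def r_def indicator_def)
  have [measurable]: "\<xi> \<in> borel_measurable borel" using L2 by measurable
  show "in_L2 \<xi>\<^sub>0"
    unfolding in_L2_iff
  proof
    show [measurable]: "\<xi>\<^sub>0 \<in> borel_measurable borel" unfolding \<xi>\<^sub>0_def by measurable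
    have "integrable cantor_measure (\<lambda>x. (cmod (\<xi> x))\<^sup>2)" using L2 by (simp add: in_L2_iff)
    moreover have "(\<lambda>x. (cmod (\<xi>\<^sub>0 x))\<^sup>2) \<in> borel_measurable cantor_measure" by measurable
    moreover have "AE x in cantor_measure. (cmod (\<xi> x))\<^sup>2 = (cmod (\<xi>\<^sub>0 x))\<^sup>2"
      using ae by eventually_elim simp
    ultimately show "integrable cantor_measure (\<lambda>x. (cmod (\<xi>\<^sub>0 x))\<^sup>2)"
      by (rule integrable_cong_AE_imp)
  qed
qed

lemma not_L2_convergent_if_steps_tendsto_pos:
  assumes L2: "\<And>n. in_L2 (X n)"
    and steps: "(\<lambda>n. L2_norm_sq (X (Suc n) - X n)) \<longlonglongrightarrow> c" and "c > 0"
  shows "\<not> (\<exists>\<eta>. in_L2 \<eta> \<and> (\<lambda>n. L2_norm_sq (X n - \<eta>)) \<longlonglongrightarrow> 0)"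
proof
  assume "\<exists>\<eta>. in_L2 \<eta> \<and> (\<lambda>n. L2_norm_sq (X n - \<eta>)) \<longlonglongrightarrow> 0"
  then obtain \<eta> where \<eta>: "in_L2 \<eta>" "(\<lambda>n. L2_norm_sq (X n - \<eta>)) \<longlonglongrightarrow> 0" by blast
  have "(\<lambda>n. 2 * L2_norm_sq (X (Suc n) - \<eta>) + 2 * L2_norm_sq (X n - \<eta>)) \<longlonglongrightarrow> 2*0 + 2*0"
    by (intro tendsto_intros \<eta>(2) LIMSEQ_Suc[OF \<eta>(2)])
  moreover have "L2_norm_sq (X (Suc n) - X n) \<le> 2 * L2_norm_sq (X (Suc n) - \<eta>) + 2 * L2_norm_sq (X n - \<eta>)" for n
    using L2_norm_sq_diff_le[OF L2 L2 \<eta>(1)] .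
  ultimately have "c \<le> 2*0 + 2*0"
    by (intro tendsto_le[OF trivial_limit_sequentially _ steps]) auto
  with \<open>c > 0\<close> show False by simp
qed

lemma cascade_pow_multiple_indicator_cantor_set:
  "(cascade ^^ n) (\<lambda>x. a * indicator cantor_set x) = (\<lambda>x. a * indicator cantor_set x)"
  by (induction n) (simp_all add: cascade_multiple_indicator_cantor_set)

lemma L2_norm_sq_cascade_step_pos:
  assumes L2: "in_L2 \<xi>" and "0 \<le> r" and supp: "supported_on {-r..1+r} \<xi>"
    and supp_N: "supported_on {-1/4..5/4} ((cascade ^^ N) \<xi>)"
    and not_multiple: "\<not> (\<exists>a. AE x in cantor_measure. \<xi> x = a * indicator cantor_set x)"
  shows "L2_norm_sq (cascade ((cascade ^^ N) \<xi>) - (cascade ^^ N) \<xi>) > 0"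
proof (rule ccontr)
  define \<eta> where "\<eta> = (cascade ^^ N) \<xi>"
  have \<eta>: "in_L2 \<eta>" "supported_on {-1/4..5/4} \<eta>"
    using in_L2_cascade_pow[OF L2] supp_N by (simp_all add: \<eta>_def)
  assume "\<not> L2_norm_sq (cascade ((cascade ^^ N) \<xi>) - (cascade ^^ N) \<xi>) > 0"
  then have "L2_norm_sq (cascade \<eta> - \<eta>) = 0"
    using L2_norm_sq_nonneg[of "cascade \<eta> - \<eta>"] by (simp add: \<eta>_def)
  then have "AE x in cantor_measure. cascade \<eta> x - \<eta> x = 0"
    using \<eta>(1) by (simp add: L2_norm_sq_eq_0_iff in_L2_diff in_L2_cascade)
  then have "AE x in cantor_measure. cascade \<eta> x = \<eta> x" by simp
  then obtain a where a: "AE x in cantor_measure. \<eta> x = a * indicator cantor_set x"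
    using cascade_fixed_point[OF \<eta>] by blast
  define \<delta> where "\<delta> = \<xi> - (\<lambda>x. a * indicator cantor_set x)"
  have "(cascade ^^ N) \<delta> = \<eta> - (\<lambda>x. a * indicator cantor_set x)"
    by (simp add: \<delta>_def \<eta>_def cascade_pow_diff cascade_pow_multiple_indicator_cantor_set)
  with a have ae_\<delta>: "AE x in cantor_measure. (cascade ^^ N) \<delta> x = 0" by simp
  have supp_\<delta>: "supported_on {-r..} \<delta>"
  proof -
    have "x \<notin> cantor_set" if "x < -r" for x
      using that cantor_set_bounds[of x] \<open>0 \<le> r\<close> by linarith
    then have "supported_on {-r..} (\<lambda>x. a * indicator cantor_set x)"
      unfolding supported_on_def by (simp add: not_le)
    moreover have "supported_on {-r..} \<xi>" using supp by (rule supported_on_mono) auto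
    ultimately show ?thesis unfolding \<delta>_def by (intro supported_on_diff)
  qed
  have "AE x in cantor_measure. \<delta> x = 0"
    using AE_eq_0_if_cascade_pow_AE_eq_0[OF _ supp_\<delta> ae_\<delta>] \<open>0 \<le> r\<close> by simp
  then have "AE x in cantor_measure. \<xi> x = a * indicator cantor_set x"
    by eventually_elim (simp add: \<delta>_def)
  with not_multiple show False by blast
qed

lemma eventually_L2_norm_sq_cascade_step_eq:
  assumes L2: "in_L2 \<xi>" and "0 \<le> r" and supp: "supported_on {-r..1+r} \<xi>"
    and not_multiple: "\<not> (\<exists>a. AE x in cantor_measure. \<xi> x = a * indicator cantor_set x)"
  shows "\<exists>c>0. \<forall>\<^sub>F n in sequentially. L2_norm_sq ((cascade ^^ Suc n) \<xi> - (cascade ^^ n) \<xi>) = c"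
proof -
  obtain N :: nat where "4 * r < 3^N" using real_arch_pow[of 3 "4 * r"] by auto
  then have supp_N: "supported_on {-1/4..5/4} ((cascade ^^ N) \<xi>)"
    using supported_on_cascade_pow_shrinking[OF supp, of N]
    by (elim supported_on_mono) (auto simp: field_simps)
  define \<eta> where "\<eta> = (cascade ^^ N) \<xi>"
  have "L2_norm_sq ((cascade ^^ Suc n) \<xi> - (cascade ^^ n) \<xi>) = L2_norm_sq (cascade \<eta> - \<eta>)"
    if "N \<le> n" for n
  proof -
    have "cascade ^^ n = (cascade ^^ (n - N)) \<circ> (cascade ^^ N)"
      using that by (metis funpow_add le_add_diff_inverse2)
    then have "L2_norm_sq ((cascade ^^ Suc n) \<xi> - (cascade ^^ n) \<xi>)
        = L2_norm_sq ((cascade ^^ Suc (n - N)) \<eta> - (cascade ^^ (n - N)) \<eta>)"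
      by (simp add: \<eta>_def)
    also have "\<dots> = L2_norm_sq (cascade \<eta> - \<eta>)"
      unfolding \<eta>_def using L2 supp_N by (intro L2_norm_sq_cascade_pow_step in_L2_cascade_pow)
    finally show ?thesis .
  qed
  moreover have "L2_norm_sq (cascade \<eta> - \<eta>) > 0"
    unfolding \<eta>_def using L2_norm_sq_cascade_step_pos[OF L2 \<open>0 \<le> r\<close> supp supp_N not_multiple] .
  ultimately show ?thesis by (auto simp: eventually_sequentially)
qed

lemma L2_norm_sq_cascade_step_cong_AE:
  assumes "in_L2 \<xi>" "in_L2 \<xi>\<^sub>0" "AE x in cantor_measure. \<xi> x = \<xi>\<^sub>0 x"
  shows "L2_norm_sq ((cascade ^^ Suc n) \<xi> - (cascade ^^ n) \<xi>)
    = L2_norm_sq ((cascade ^^ Suc n) \<xi>\<^sub>0 - (cascade ^^ n) \<xi>\<^sub>0)"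
  using assms cascade_pow_cong_AE[OF assms(3), of n] cascade_pow_cong_AE[OF assms(3), of "Suc n"]
  by (intro L2_norm_sq_cong_AE in_L2_diff in_L2_cascade_pow) (auto elim: eventually_elim2)

theorem proposition3p10:
  fixes \<xi> :: "real \<Rightarrow> complex"
  assumes "in_L2 \<xi>"
    and "\<exists>B::real. AE x in cantor_measure. B < \<bar>x\<bar> \<longrightarrow> \<xi> x = 0"
    and "\<not> (\<exists>c::complex. AE x in cantor_measure. \<xi> x = c * indicator cantor_set x)"
  shows "(\<exists>c>0. (\<lambda>n. L2_norm_sq ((cascade ^^ Suc n) \<xi> - (cascade ^^ n) \<xi>)) \<longlonglongrightarrow> c)
         \<and> \<not> (\<exists>\<eta>. in_L2 \<eta> \<and> (\<lambda>n. L2_norm_sq ((cascade ^^ n) \<xi> - \<eta>)) \<longlonglongrightarrow> 0)"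
proof -
  obtain \<xi>\<^sub>0 r where \<xi>\<^sub>0: "in_L2 \<xi>\<^sub>0" "0 \<le> r" "supported_on {-r..1+r} \<xi>\<^sub>0"
    and ae: "AE x in cantor_measure. \<xi> x = \<xi>\<^sub>0 x"
    using assms(1,2) in_L2_restrict_support by metis
  have "\<not> (\<exists>a. AE x in cantor_measure. \<xi>\<^sub>0 x = a * indicator cantor_set x)"
  proof
    assume "\<exists>a. AE x in cantor_measure. \<xi>\<^sub>0 x = a * indicator cantor_set x"
    then obtain a where "AE x in cantor_measure. \<xi>\<^sub>0 x = a * indicator cantor_set x" by blast
    with ae have "AE x in cantor_measure. \<xi> x = a * indicator cantor_set x" by eventually_elim simp
    with assms(3) show False by blast
  qed
  then obtain c where "c > 0"
    and "\<forall>\<^sub>F n in sequentially. L2_norm_sq ((cascade ^^ Suc n) \<xi>\<^sub>0 - (cascade ^^ n) \<xi>\<^sub>0) = c"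
    using eventually_L2_norm_sq_cascade_step_eq[OF \<xi>\<^sub>0] by blast
  then have lim: "(\<lambda>n. L2_norm_sq ((cascade ^^ Suc n) \<xi> - (cascade ^^ n) \<xi>)) \<longlonglongrightarrow> c"
    using L2_norm_sq_cascade_step_cong_AE[OF assms(1) \<xi>\<^sub>0(1) ae] by (simp add: tendsto_eventually)
  have "\<not> (\<exists>\<eta>. in_L2 \<eta> \<and> (\<lambda>n. L2_norm_sq ((cascade ^^ n) \<xi> - \<eta>)) \<longlonglongrightarrow> 0)"
    by (rule not_L2_convergent_if_steps_tendsto_pos[where X = "\<lambda>n. (cascade ^^ n) \<xi>"])
       (use in_L2_cascade_pow[OF assms(1)] lim \<open>c > 0\<close> in simp_all)
  with lim \<open>c > 0\<close> show ?thesis by blast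
qed

end
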